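(* Let $(n_k)_{k\in\mathbb{N}}$ and $(m_k)_{k\in\mathbb{N}}$ be two sequences of positive integers with $m_k\geq n_k/2$ for every $k\in\mathbb{N}$, and let $t:=\sup_{k\in\mathbb{N}}\{n_k/m_k\}$. Let $Q\in\mathbb{R}[x]$ be a polynomial and let $\{f_k:\mathbb{Z}_{n_k}\to\mathbb{C}\}_{k\in\mathbb{N}}$ be a family of functions with $\|f_k\|_2^2\le Q(\log(n_k))$ for all $k\in\mathbb{N}$. Let $\epsilon>0$. If $\{f_k\}_{k\in\mathbb{N}}$ is $\epsilon$-concentrated, then for every $\eta>0$ the family $\{\widetilde{f_k}:\mathbb{Z}_{m_k}\to\mathbb{C}\}_{k\in\mathbb{N}}$ is $(t\epsilon+\eta)$-concentrated.
   Context: $\mathbb{Z}_n=\{0,1,\dots,n-1\}$ with addition mod $n$. For $f,g:\mathbb{Z}_n\to\mathbb{C}$, $\langle f,g\rangle=\frac1n\sum_{x\in\mathbb{Z}_n}f(x)\overline{g(x)}$ and $\|f\|_2^2=\langle f,f\rangle$. For $\alpha\in\mathbb{Z}_n$, $\chi_\alpha(x)=\exp(2\pi i\alpha x/n)$ and $\widehat f(\alpha)=\langle f,\chi_\alpha\rangle$. For $\Gamma\subseteq\mathbb{Z}_n$, $f|_\Gamma(x)=\sum_{\alpha\in\Gamma}\widehat f(\alpha)\chi_\alpha(x)$ (a function on $\mathbb{Z}_n$). For $f:\mathbb{Z}_n\to\mathbb{C}$ and $m\in\mathbb{N}$, $\widetilde f:\mathbb{Z}_m\to\mathbb{C}$ is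 $\widetilde f(x)=f(x)$ for $0\le x<\min(n,m)$ and $0$ otherwise. For $\delta>0$, a family $\{f_k:\mathbb{Z}_{n_k}\to\mathbb{C}\}_{k\in\mathbb{N}}$ is $\delta$-concentrated if there is a polynomial $P\in\mathbb{R}[x]$ such that for all $k\in\mathbb{N}$ there is $\Gamma_k\subseteq\mathbb{Z}_{n_k}$ with $|\Gamma_k|\le P(\log(n_k))$ and $\|f_k-f_k|_{\Gamma_k}\|_2^2<\delta$. *)

theory Defs
  imports "HOL-Analysis.Analysis" "HOL-Computational_Algebra.Polynomial"
begin

text \<open>A function on Z_n is modelled as a function nat => complex; only the values
  at 0, ..., n-1 are ever used.\<close>

definition zn_inner :: "nat \<Rightarrow> (nat \<Rightarrow> complex) \<Rightarrow> (nat \<Rightarrow> complex) \<Rightarrow> complex" where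
  "zn_inner n f g = (1 / of_nat n) * (\<Sum>x<n. f x * cnj (g x))"

definition zn_norm2sq :: "nat \<Rightarrow> (nat \<Rightarrow> complex) \<Rightarrow> real" where
  "zn_norm2sq n f = Re (zn_inner n f f)"

definition zn_char :: "nat \<Rightarrow> nat \<Rightarrow> nat \<Rightarrow> complex" where
  "zn_char n \<alpha> x = exp (2 * of_real pi * \<i> * of_nat \<alpha> * of_nat x / of_nat n)"

definition zn_fourier :: "nat \<Rightarrow> (nat \<Rightarrow> complex) \<Rightarrow> nat \<Rightarrow> complex" where
  "zn_fourier n f \<alpha> = zn_inner n f (zn_char n \<alpha>)"

definition zn_restrict :: "nat \<Rightarrow> (nat \<Rightarrow> complex) \<Rightarrow> nat set \<Rightarrow> nat \<Rightarrow> complex" where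
  "zn_restrict n f \<Gamma> x = (\<Sum>\<alpha>\<in>\<Gamma>. zn_fourier n f \<alpha> * zn_char n \<alpha> x)"

definition zn_extend :: "nat \<Rightarrow> nat \<Rightarrow> (nat \<Rightarrow> complex) \<Rightarrow> nat \<Rightarrow> complex" where
  "zn_extend n m f x = (if x < min n m then f x else 0)"

definition concentrated :: "real \<Rightarrow> (nat \<Rightarrow> nat) \<Rightarrow> (nat \<Rightarrow> nat \<Rightarrow> complex) \<Rightarrow> bool" where
  "concentrated \<delta> ns fs \<longleftrightarrow>
     (\<exists>P :: real poly. \<forall>k. \<exists>\<Gamma>. \<Gamma> \<subseteq> {..<ns k} \<and>
        real (card \<Gamma>) \<le> poly P (ln (real (ns k))) \<and>
        zn_norm2sq (ns k) (\<lambda>x. fs k x - zn_restrict (ns k) (fs k) \<Gamma> x) < \<delta>)"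

end

theory Submission
  imports Defs
begin

text \<open>
  By Parseval, the residual \<open>f - f|\<^sub>\<Gamma>\<close> has energy equal to the Fourier mass outside \<open>\<Gamma>\<close>,
  so \<open>f = h + (\<Sum>\<alpha>\<in>\<Gamma>. c\<^sub>\<alpha> \<chi>\<^sub>\<alpha>)\<close> with \<open>c\<^sub>\<alpha>\<close> the Fourier coefficients of \<open>f\<close> and
  \<open>\<parallel>h\<parallel>\<^sup>2 < \<epsilon>\<close>. Extending to \<open>\<int>\<^sub>m\<close> multiplies energies by at most \<open>n/m \<le> t\<close>, so
  \<open>\<parallel>h\<^sup>~\<parallel>\<^sup>2 < t\<epsilon>\<close>. The extended character \<open>\<chi>\<^sub>\<alpha>\<^sup>~\<close> is a truncated geometric progression: its Fourier coefficient at the frequency \<open>j\<close> steps away from \<open>\<lfloor>\<alpha>m/n\<rfloor>\<close> is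
  \<open>O(1/j)\<close>, so all but \<open>4/L\<close> of its energy lies in a window of \<open>2L+1\<close> frequencies. Taking
  \<open>\<Gamma>'\<close> to be the union of these windows, the triangle inequality bounds the new residual by
  \<open>\<surd>(t\<epsilon>) + |\<Gamma>| \<parallel>f\<parallel> 2/\<surd>L\<close>; choosing \<open>L\<close> polynomial in \<open>log n\<close> makes the second term
  small while \<open>|\<Gamma>'|\<close> stays polynomial; since \<open>n \<le> 2m\<close>, a polynomial in \<open>log n\<close> is
  bounded by a polynomial in \<open>log m\<close>.
\<close>

subsection \<open>Characters\<close>

definition e2pi :: "real \<Rightarrow> complex" where
  "e2pi r = exp (2 * of_real pi * \<i> * of_real r)"

lemma zn_char_e2pi: "zn_char n a x = e2pi (real a * real x / real n)"
  unfolding zn_char_def e2pi_def by (simp add: mult.assoc)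

lemma e2pi_add: "e2pi (a + b) = e2pi a * e2pi b"
  unfolding e2pi_def by (simp add: algebra_simps flip: exp_add)

lemma e2pi_minus: "e2pi (- a) = cnj (e2pi a)"
  unfolding e2pi_def by (simp add: exp_cnj)

lemma e2pi_power: "e2pi r ^ k = e2pi (r * real k)"
  unfolding e2pi_def by (simp add: mult_ac flip: exp_of_nat_mult)

lemma e2pi_0 [simp]: "e2pi 0 = 1"
  unfolding e2pi_def by simp

lemma norm_e2pi [simp]: "norm (e2pi r) = 1"
  unfolding e2pi_def by (simp add: norm_exp_eq_Re)

lemma e2pi_eq_1_iff: "e2pi r = 1 \<longleftrightarrow> r \<in> \<int>"
proof
  assume "e2pi r = 1"
  then obtain k :: int where "2 * pi * r = of_int (2 * k) * pi"
    unfolding e2pi_def exp_eq_1 by auto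
  then show "r \<in> \<int>" by simp
next
  assume "r \<in> \<int>"
  then show "e2pi r = 1"
    unfolding e2pi_def using exp_integer_2pi[of "of_real r"] by (simp add: mult_ac)
qed

lemma e2pi_add_int: "k \<in> \<int> \<Longrightarrow> e2pi (r + k) = e2pi r"
  by (simp add: e2pi_add e2pi_eq_1_iff)

lemma zn_char_mult_cnj:
  "zn_char n a x * cnj (zn_char m c x) = e2pi (real a / real n - real c / real m) ^ x"
proof -
  have "real a * real x / real n + - (real c * real x / real m)
      = (real a / real n - real c / real m) * real x"
    by (simp add: algebra_simps)
  then show ?thesis
    by (simp add: zn_char_e2pi e2pi_power flip: e2pi_minus e2pi_add)
qed

lemma zn_char_commute: "zn_char m b x = zn_char m x b"
  by (simp add: zn_char_def mult_ac)

lemma zn_char_orthogonal: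
  assumes "b < m" "c < m"
  shows "(\<Sum>x<m. zn_char m b x * cnj (zn_char m c x)) = (if b = c then of_nat m else 0)"
proof (cases "b = c")
  case False
  define z where "z = e2pi ((real b - real c) / real m)"
  have "z \<noteq> 1"
  proof
    assume "z = 1"
    then obtain k :: int where k: "real b - real c = of_int k * real m"
      using assms by (auto simp: z_def e2pi_eq_1_iff field_simps elim!: Ints_cases)
    have "\<bar>real b - real c\<bar> < real m" using assms by auto
    then have "\<bar>of_int k\<bar> * real m < 1 * real m"
      using k by (simp flip: abs_mult)
    then have "\<bar>of_int k :: real\<bar> < 1"
      by (simp only: mult_less_cancel_right)
    then have "k = 0" by linarith
    with k False show False by simp
  qed
  moreover have "z ^ m = 1"
    using assms by (simp add: z_def e2pi_power e2pi_eq_1_iff)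
  ultimately show ?thesis
    using False by (simp add: zn_char_mult_cnj z_def diff_divide_distrib sum_gp_strict)
qed (simp add: zn_char_mult_cnj)

lemma zn_norm2sq_eq: "zn_norm2sq m w = (\<Sum>x<m. (cmod (w x))\<^sup>2) / real m"
proof -
  have "(\<Sum>x<m. w x * cnj (w x)) = of_real (\<Sum>x<m. (cmod (w x))\<^sup>2)"
    by (simp add: complex_norm_square[symmetric] of_real_sum)
  then show ?thesis unfolding zn_norm2sq_def zn_inner_def by simp
qed

lemma zn_norm2sq_cong:
  "(\<And>x. x < m \<Longrightarrow> f x = g x) \<Longrightarrow> zn_norm2sq m f = zn_norm2sq m g"
  unfolding zn_norm2sq_eq by simp

lemma zn_norm2sq_nonneg: "0 \<le> zn_norm2sq m w"
  unfolding zn_norm2sq_eq by (simp add: sum_nonneg)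

subsection \<open>Parseval's identity and the residual\<close>

definition zn_residual :: "nat \<Rightarrow> (nat \<Rightarrow> complex) \<Rightarrow> nat set \<Rightarrow> nat \<Rightarrow> complex" where
  "zn_residual m f S x = f x - zn_restrict m f S x"

lemma zn_norm2sq_sum_zn_char:
  assumes "T \<subseteq> {..<m}" "0 < m"
  shows "zn_norm2sq m (\<lambda>x. \<Sum>b\<in>T. c b * zn_char m b x) = (\<Sum>b\<in>T. (cmod (c b))\<^sup>2)"
proof -
  have fin: "finite T" using assms finite_subset by blast
  have "(\<Sum>x<m. (\<Sum>b\<in>T. c b * zn_char m b x) * cnj (\<Sum>b\<in>T. c b * zn_char m b x))
     = (\<Sum>x<m. \<Sum>b\<in>T. \<Sum>b'\<in>T. c b * cnj (c b') * (zn_char m b x * cnj (zn_char m b' x)))"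
    by (simp add: cnj_sum sum_product mult_ac)
  also have "\<dots> = (\<Sum>b\<in>T. \<Sum>b'\<in>T. c b * cnj (c b') * (\<Sum>x<m. zn_char m b x * cnj (zn_char m b' x)))"
    by (simp only: sum.swap[of _ "{..<m}"] sum_distrib_left)
  also have "\<dots> = (\<Sum>b\<in>T. c b * cnj (c b) * of_nat m)"
    using assms by (simp add: zn_char_orthogonal subset_eq if_distrib fin cong: if_cong)
  also have "\<dots> = (\<Sum>b\<in>T. of_real ((cmod (c b))\<^sup>2) * of_nat m)"
    by (simp only: complex_norm_square)
  also have "\<dots> = of_real (real m * (\<Sum>b\<in>T. (cmod (c b))\<^sup>2))"
    by (simp add: sum_distrib_left mult_ac)
  finally show ?thesis
    unfolding zn_norm2sq_def zn_inner_def using assms by simp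
qed

lemma zn_fourier_inversion:
  assumes "x < m"
  shows "(\<Sum>b<m. zn_fourier m w b * zn_char m b x) = w x"
proof -
  have "(\<Sum>b<m. zn_fourier m w b * zn_char m b x)
      = (\<Sum>b<m. \<Sum>y<m. (1 / of_nat m) * w y * (cnj (zn_char m b y) * zn_char m b x))"
    unfolding zn_fourier_def zn_inner_def
    by (simp add: sum_distrib_left sum_distrib_right mult.assoc)
  also have "\<dots> = (\<Sum>b<m. \<Sum>y<m. (1 / of_nat m) * w y * (zn_char m x b * cnj (zn_char m y b)))"
    by (intro sum.cong refl) (metis zn_char_commute mult.commute)
  also have "\<dots> = (\<Sum>y<m. (1 / of_nat m) * w y * (\<Sum>b<m. zn_char m x b * cnj (zn_char m y b)))"
    by (subst sum.swap) (simp add: sum_distrib_left)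
  also have "\<dots> = w x"
    using assms by (simp add: zn_char_orthogonal if_distrib cong: if_cong)
  finally show ?thesis .
qed

lemma zn_residual_eq_restrict_compl:
  assumes "S \<subseteq> {..<m}" "x < m"
  shows "zn_residual m w S x = zn_restrict m w ({..<m} - S) x"
proof -
  have "w x = zn_restrict m w ({..<m} - S) x + zn_restrict m w S x"
    using assms zn_fourier_inversion[of x m w]
    by (simp add: zn_restrict_def sum.subset_diff[of S])
  then show ?thesis unfolding zn_residual_def by simp
qed

lemma zn_norm2sq_residual:
  assumes "S \<subseteq> {..<m}" "0 < m"
  shows "zn_norm2sq m (zn_residual m w S) = (\<Sum>b\<in>{..<m} - S. (cmod (zn_fourier m w b))\<^sup>2)"
proof -
  have "zn_norm2sq m (zn_residual m w S) = zn_norm2sq m (zn_restrict m w ({..<m} - S))"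
    using assms by (intro zn_norm2sq_cong) (simp add: zn_residual_eq_restrict_compl)
  also have "\<dots> = (\<Sum>b\<in>{..<m} - S. (cmod (zn_fourier m w b))\<^sup>2)"
    unfolding zn_restrict_def using assms by (intro zn_norm2sq_sum_zn_char) auto
  finally show ?thesis .
qed

lemma zn_residual_empty [simp]: "zn_residual m w {} = w"
  by (simp add: zn_residual_def zn_restrict_def fun_eq_iff)

lemma norm_zn_fourier_sq_le:
  assumes "b < m"
  shows "(cmod (zn_fourier m w b))\<^sup>2 \<le> zn_norm2sq m w"
proof -
  have "(cmod (zn_fourier m w b))\<^sup>2 \<le> (\<Sum>b\<in>{..<m} - {}. (cmod (zn_fourier m w b))\<^sup>2)"
    using assms by (intro member_le_sum) auto
  also have "\<dots> = zn_norm2sq m w"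
    using zn_norm2sq_residual[of "{}" m w] assms by simp
  finally show ?thesis .
qed

lemma zn_fourier_linear:
  assumes "finite A"
  shows "zn_fourier m (\<lambda>x. v x + (\<Sum>a\<in>A. c a * w a x)) b
       = zn_fourier m v b + (\<Sum>a\<in>A. c a * zn_fourier m (w a) b)"
proof -
  have "(\<Sum>x<m. (\<Sum>a\<in>A. c a * w a x) * cnj (zn_char m b x))
      = (\<Sum>a\<in>A. c a * (\<Sum>x<m. w a x * cnj (zn_char m b x)))"
    by (simp only: sum_distrib_right sum_distrib_left mult.assoc sum.swap[of _ A])
  then show ?thesis
    unfolding zn_fourier_def zn_inner_def
    by (simp add: distrib_left distrib_right sum.distrib sum_distrib_left mult_ac)
qed

lemma zn_residual_linear:
  assumes "finite A" "finite S"
  shows "zn_residual m (\<lambda>x. v x + (\<Sum>a\<in>A. c a * w a x)) S y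
       = zn_residual m v S y + (\<Sum>a\<in>A. c a * zn_residual m (w a) S y)"
proof -
  have "zn_restrict m (\<lambda>x. v x + (\<Sum>a\<in>A. c a * w a x)) S y
      = zn_restrict m v S y + (\<Sum>b\<in>S. \<Sum>a\<in>A. c a * (zn_fourier m (w a) b * zn_char m b y))"
    unfolding zn_restrict_def zn_fourier_linear[OF assms(1)]
    by (simp add: distrib_right sum.distrib sum_distrib_right mult.assoc)
  also have "(\<Sum>b\<in>S. \<Sum>a\<in>A. c a * (zn_fourier m (w a) b * zn_char m b y))
      = (\<Sum>a\<in>A. c a * zn_restrict m (w a) S y)"
    unfolding zn_restrict_def by (simp only: sum.swap[of _ S] sum_distrib_left)
  finally show ?thesis
    unfolding zn_residual_def by (simp add: right_diff_distrib sum_subtractf)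
qed

definition zn_norm :: "nat \<Rightarrow> (nat \<Rightarrow> complex) \<Rightarrow> real" where
  "zn_norm m w = sqrt (zn_norm2sq m w)"

lemma zn_norm_L2_set: "zn_norm m w = L2_set (\<lambda>x. cmod (w x)) {..<m} / sqrt (real m)"
  unfolding zn_norm_def zn_norm2sq_eq L2_set_def by (simp add: real_sqrt_divide)

lemma zn_norm_nonneg [simp]: "0 \<le> zn_norm m w"
  unfolding zn_norm_def by (simp add: zn_norm2sq_nonneg)

lemma zn_norm_power2 [simp]: "(zn_norm m w)\<^sup>2 = zn_norm2sq m w"
  unfolding zn_norm_def by (simp add: zn_norm2sq_nonneg)

lemma zn_norm_triangle: "zn_norm m (\<lambda>x. v x + w x) \<le> zn_norm m v + zn_norm m w"
proof -
  have "L2_set (\<lambda>x. cmod (v x + w x)) {..<m} \<le> L2_set (\<lambda>x. cmod (v x) + cmod (w x)) {..<m}"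
    by (intro L2_set_mono norm_triangle_ineq norm_ge_zero)
  also have "\<dots> \<le> L2_set (\<lambda>x. cmod (v x)) {..<m} + L2_set (\<lambda>x. cmod (w x)) {..<m}"
    by (rule L2_set_triangle_ineq)
  finally show ?thesis
    unfolding zn_norm_L2_set by (simp add: divide_right_mono flip: add_divide_distrib)
qed

lemma zn_norm_scaleC: "zn_norm m (\<lambda>x. c * w x) = cmod c * zn_norm m w"
  unfolding zn_norm_L2_set by (simp add: L2_set_right_distrib norm_mult)

lemma zn_norm_sum_le:
  "finite A \<Longrightarrow> zn_norm m (\<lambda>x. \<Sum>a\<in>A. g a x) \<le> (\<Sum>a\<in>A. zn_norm m (g a))"
proof (induction A rule: finite_induct)
  case empty
  then show ?case by (simp add: zn_norm_L2_set L2_set_0')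
next
  case (insert a A)
  then show ?case
    using zn_norm_triangle[of m "g a" "\<lambda>x. \<Sum>a\<in>A. g a x"] by simp
qed

lemma zn_norm_residual_le:
  assumes "S \<subseteq> {..<m}" "0 < m"
  shows "zn_norm m (zn_residual m w S) \<le> zn_norm m w"
proof -
  have "zn_norm2sq m (zn_residual m w S) \<le> zn_norm2sq m (zn_residual m w {})"
    using assms by (simp only: zn_norm2sq_residual empty_subsetI) (intro sum_mono2, auto)
  then show ?thesis unfolding zn_norm_def by simp
qed

lemma norm_one_minus_e2pi: "cmod (1 - e2pi p) = 2 * \<bar>sin (pi * p)\<bar>"
proof -
  have "(cmod (1 - e2pi p))\<^sup>2 = (1 - cos (2 * (pi * p)))\<^sup>2 + (sin (2 * (pi * p)))\<^sup>2"
    unfolding cmod_power2 e2pi_def by (simp add: Re_exp Im_exp mult_ac)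
  also have "\<dots> = 2 - 2 * cos (2 * (pi * p))"
    by (simp add: power2_diff sin_squared_eq)
  also have "\<dots> = (2 * \<bar>sin (pi * p)\<bar>)\<^sup>2"
    by (simp add: cos_double_sin power_mult_distrib)
  finally show ?thesis
    by (rule power2_eq_imp_eq) simp_all
qed

lemma abs_sin_ge_half:
  fixes x :: real
  assumes "\<bar>x\<bar> \<le> pi / 2"
  shows "\<bar>x\<bar> / 2 \<le> \<bar>sin x\<bar>"
proof -
  have taylor: "\<bar>sin x - x\<bar> \<le> \<bar>x\<bar> ^ 3 / 6"
    using Maclaurin_sin_bound[of x 3] by (simp add: eval_nat_numeral sin_coeff_def)
  have "\<bar>x\<bar>\<^sup>2 \<le> (pi / 2)\<^sup>2"
    using assms by (intro power_mono) auto
  also have "\<dots> \<le> 1.6\<^sup>2"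
    using pi_approx by (intro power_mono) auto
  also have "\<dots> \<le> 3"
    by (simp add: power2_eq_square)
  finally have "\<bar>x\<bar> * \<bar>x\<bar>\<^sup>2 \<le> \<bar>x\<bar> * 3"
    by (intro mult_left_mono) auto
  moreover have "\<bar>x\<bar> ^ 3 = \<bar>x\<bar> * \<bar>x\<bar>\<^sup>2"
    by (simp add: eval_nat_numeral)
  ultimately show ?thesis
    using taylor by linarith
qed

lemma norm_one_minus_e2pi_ge:
  assumes "\<bar>p\<bar> \<le> 1 / 2"
  shows "2 * \<bar>p\<bar> \<le> cmod (1 - e2pi p)"
proof -
  have "\<bar>pi * p\<bar> \<le> pi / 2"
    using assms by (simp add: abs_mult)
  then have "pi * \<bar>p\<bar> / 2 \<le> \<bar>sin (pi * p)\<bar>"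
    using abs_sin_ge_half[of "pi * p"] by (simp add: abs_mult)
  moreover have "2 * \<bar>p\<bar> \<le> pi * \<bar>p\<bar>"
    using pi_ge_two by (intro mult_right_mono) auto
  ultimately show ?thesis by (simp add: norm_one_minus_e2pi)
qed

lemma norm_sum_e2pi_power_le:
  assumes "\<bar>\<psi>\<bar> \<le> 1 / 2" "\<psi> \<noteq> 0"
  shows "cmod (\<Sum>x<K. e2pi \<psi> ^ x) \<le> 1 / \<bar>\<psi>\<bar>"
proof -
  have gap: "2 * \<bar>\<psi>\<bar> \<le> cmod (1 - e2pi \<psi>)"
    by (rule norm_one_minus_e2pi_ge[OF assms(1)])
  then have "e2pi \<psi> \<noteq> 1"
    using assms by auto
  then have "cmod (\<Sum>x<K. e2pi \<psi> ^ x) = cmod (1 - e2pi \<psi> ^ K) / cmod (1 - e2pi \<psi>)"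
    by (simp add: sum_gp_strict norm_divide)
  also have "\<dots> \<le> 2 / (2 * \<bar>\<psi>\<bar>)"
    using gap assms norm_triangle_ineq4[of 1 "e2pi \<psi> ^ K"]
    by (intro frac_le) (auto simp: norm_power)
  finally show ?thesis by simp
qed

lemma sum_inverse_squares_le:
  assumes "1 \<le> L"
  shows "(\<Sum>i\<in>{L..<N}. 1 / (real i)\<^sup>2) \<le> 2 / real L"
proof -
  have telescope: "(\<Sum>i\<in>{L..<L+k}. 1 / (real i)\<^sup>2) \<le> 2 / real L - 2 / real (L + k)" for k
  proof (induction k)
    case (Suc k)
    define t where "t = real (L + k)"
    have t: "t \<ge> 1" using assms by (simp add: t_def)
    then have "t * (t + 1) \<le> 2 * t\<^sup>2"
      using mult_right_mono[of 1 t t] by (simp add: power2_eq_square algebra_simps)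
    then have "1 / t\<^sup>2 \<le> 2 / (t * (t + 1))"
      using t by (simp add: divide_simps)
    also have "\<dots> = 2 / t - 2 / (t + 1)"
      using t by (simp add: field_simps)
    finally have "1 / t\<^sup>2 \<le> 2 / t - 2 / (t + 1)" .
    with Suc show ?case by (simp add: t_def add_ac)
  qed simp
  have "(\<Sum>i\<in>{L..<N}. 1 / (real i)\<^sup>2) \<le> (\<Sum>i\<in>{L..<L+N}. 1 / (real i)\<^sup>2)"
    by (intro sum_mono2) auto
  also have "\<dots> \<le> 2 / real L - 2 / real (L + N)"
    by (rule telescope)
  also have "\<dots> \<le> 2 / real L"
    by simp
  finally show ?thesis .
qed

lemma poly_bound_shift:
  fixes P :: "real poly"
  assumes "0 \<le> c"
  obtains R :: "real poly" where "\<And>x y. 0 \<le> x \<Longrightarrow> 0 \<le> y \<Longrightarrow> y \<le> x + c \<Longrightarrow> poly P y \<le> poly R x"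
proof
  define R where "R = (\<Sum>i\<le>degree P. [:\<bar>coeff P i\<bar>:] * [:c, 1:] ^ i)"
  fix x y :: real
  assume xy: "0 \<le> x" "0 \<le> y" "y \<le> x + c"
  have "poly P y = (\<Sum>i\<le>degree P. coeff P i * y ^ i)"
    by (rule poly_altdef)
  also have "\<dots> \<le> (\<Sum>i\<le>degree P. \<bar>coeff P i\<bar> * (c + x) ^ i)"
    using xy by (intro sum_mono mult_mono power_mono) auto
  also have "\<dots> = poly R x"
    by (simp add: R_def poly_sum)
  finally show "poly P y \<le> poly R x" .
qed

subsection \<open>Fourier coefficients of extended characters\<close>

lemma zn_fourier_extend_zn_char:
  "zn_fourier m (zn_extend n m (zn_char n a)) c
     = (1 / of_nat m) * (\<Sum>x<min n m. e2pi (real a / real n - real c / real m) ^ x)"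
proof -
  have "(\<Sum>x<m. zn_extend n m (zn_char n a) x * cnj (zn_char m c x))
      = (\<Sum>x\<in>{..<m} \<inter> {..<min n m}. zn_char n a x * cnj (zn_char m c x))"
    unfolding sum.inter_restrict[OF finite_lessThan] by (intro sum.cong refl) (simp add: zn_extend_def)
  also have "{..<m} \<inter> {..<min n m} = {..<min n m}"
    by auto
  finally show ?thesis
    by (simp add: zn_fourier_def zn_inner_def zn_char_mult_cnj)
qed

lemma norm_zn_fourier_extend_zn_char_le:
  assumes "real a / real n - real c / real m - \<psi> \<in> \<int>" "\<bar>\<psi>\<bar> \<le> 1 / 2"
    and "0 < d" "d \<le> real m * \<bar>\<psi>\<bar>"
  shows "cmod (zn_fourier m (zn_extend n m (zn_char n a)) c) \<le> 1 / d"
proof -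
  have "0 < real m * \<bar>\<psi>\<bar>"
    using assms(3,4) by linarith
  then have "0 < real m" "\<psi> \<noteq> 0"
    by (auto simp: zero_less_mult_iff)
  have "e2pi (real a / real n - real c / real m) = e2pi \<psi>"
    using e2pi_add_int[OF assms(1), of \<psi>] by simp
  then have "cmod (zn_fourier m (zn_extend n m (zn_char n a)) c)
      = cmod (\<Sum>x<min n m. e2pi \<psi> ^ x) / real m"
    by (simp add: zn_fourier_extend_zn_char norm_divide)
  also have "\<dots> \<le> (1 / \<bar>\<psi>\<bar>) / real m"
    using norm_sum_e2pi_power_le[OF assms(2) \<open>\<psi> \<noteq> 0\<close>] by (rule divide_right_mono) simp
  also have "\<dots> \<le> 1 / d"
    using assms(3,4) by (simp add: divide_simps mult.commute)
  finally show ?thesis .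
qed

lemma floor_scaled_freq_bounds:
  fixes a n m :: nat
  assumes "a < n"
  defines "s \<equiv> real a * real m / real n"
  shows "real (nat \<lfloor>s\<rfloor>) \<le> s" "s < real (nat \<lfloor>s\<rfloor>) + 1" "0 < m \<Longrightarrow> nat \<lfloor>s\<rfloor> < m"
proof -
  have s0: "0 \<le> s" by (simp add: s_def)
  then show "real (nat \<lfloor>s\<rfloor>) \<le> s" "s < real (nat \<lfloor>s\<rfloor>) + 1"
    by linarith+
  assume "0 < m"
  with assms have "s < real m"
    by (simp add: s_def field_simps)
  with s0 show "nat \<lfloor>s\<rfloor> < m"
    by linarith
qed

lemma norm_zn_fourier_extend_zn_char_off_window:
  assumes "a < n" "1 < j" "j < m"
  defines "c \<equiv> (nat \<lfloor>real a * real m / real n\<rfloor> + j) mod m"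
  shows "(cmod (zn_fourier m (zn_extend n m (zn_char n a)) c))\<^sup>2
           \<le> 1 / (real j - 1)\<^sup>2 + 1 / (real m - real j)\<^sup>2"
proof -
  define s where "s = real a * real m / real n"
  define b where "b = nat \<lfloor>s\<rfloor>"
  have bs: "real b \<le> s" "s < real b + 1"
    using floor_scaled_freq_bounds[OF assms(1)] by (simp_all add: s_def b_def)
  define \<psi> where "\<psi> = (s - real b - real j) / real m"
  have m: "0 < real m" and n: "0 < real n" using assms by simp_all
  have "real b + real j - real c = real ((b + j) div m) * real m"
    unfolding c_def s_def[symmetric] b_def[symmetric] by (metis div_mult_mod_eq of_nat_add of_nat_mult add_diff_cancel_right')
  moreover have "real a / real n - real c / real m - \<psi> = (real b + real j - real c) / real m"
    using m n by (simp add: \<psi>_def s_def field_simps)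
  ultimately have shift: "real a / real n - real c / real m - \<psi> = real ((b + j) div m)"
    using m by simp
  let ?F = "cmod (zn_fourier m (zn_extend n m (zn_char n a)) c)"
  txt \<open>\<open>\<psi> \<in> (-1, 0)\<close> is congruent to \<open>a/n - c/m\<close> modulo 1; whichever of \<open>\<psi>\<close>, \<open>\<psi> + 1\<close>
    lies in \<open>[-1/2, 1/2]\<close> measures the distance of the two frequencies.\<close>
  have "?F \<le> 1 / (real j - 1) \<or> ?F \<le> 1 / (real m - real j)"
  proof (cases "\<psi> \<ge> -1/2")
    case True
    have "\<psi> \<le> 0"
      using bs m assms by (simp add: \<psi>_def divide_nonpos_pos)
    then have "real m * \<bar>\<psi>\<bar> = real b + real j - s"
      using m by (simp add: \<psi>_def field_simps)
    then have "?F \<le> 1 / (real j - 1)"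
      using shift True \<open>\<psi> \<le> 0\<close> bs assms(2)
      by (intro norm_zn_fourier_extend_zn_char_le[where \<psi> = \<psi>]) auto
    then show ?thesis ..
  next
    case False
    have eq: "real m * (\<psi> + 1) = real m + s - real b - real j"
      using m by (simp add: \<psi>_def field_simps)
    then have "0 \<le> real m * (\<psi> + 1)"
      using bs assms by simp
    then have "0 \<le> \<psi> + 1"
      using m by (simp add: zero_le_mult_iff)
    have "real a / real n - real c / real m - (\<psi> + 1) = real ((b + j) div m) - 1"
      using shift by linarith
    then have "real a / real n - real c / real m - (\<psi> + 1) \<in> \<int>"
      by (metis Ints_1 Ints_diff Ints_of_nat)
    then have "?F \<le> 1 / (real m - real j)"
      using eq False \<open>0 \<le> \<psi> + 1\<close> bs assms(3)
      by (intro norm_zn_fourier_extend_zn_char_le[where \<psi> = "\<psi> + 1"]) auto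
    then show ?thesis ..
  qed
  then show ?thesis
  proof
    assume "?F \<le> 1 / (real j - 1)"
    then have "?F\<^sup>2 \<le> (1 / (real j - 1))\<^sup>2"
      by (intro power_mono) simp_all
    then show ?thesis
      by (simp add: power_one_over add_increasing2)
  next
    assume "?F \<le> 1 / (real m - real j)"
    then have "?F\<^sup>2 \<le> (1 / (real m - real j))\<^sup>2"
      by (intro power_mono) simp_all
    then show ?thesis
      by (simp add: power_one_over add_increasing)
  qed
qed

text \<open>The frequencies of \<open>\<int>\<^sub>m\<close> at cyclic distance at most \<open>L\<close> from \<open>\<lfloor>am/n\<rfloor>\<close>, which is where
  the frequency \<open>a/n\<close> of \<open>\<chi>\<^sub>a\<close> lands.\<close>

definition freq_window :: "nat \<Rightarrow> nat \<Rightarrow> nat \<Rightarrow> nat \<Rightarrow> nat set" where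
  "freq_window n m a L =
     (\<lambda>j. (nat \<lfloor>real a * real m / real n\<rfloor> + j) mod m) ` ({..L} \<union> {m - L..<m})"

lemma freq_window_subset: "0 < m \<Longrightarrow> freq_window n m a L \<subseteq> {..<m}"
  unfolding freq_window_def by auto

lemma card_freq_window_le: "card (freq_window n m a L) \<le> 2 * L + 1"
proof -
  have "card (freq_window n m a L) \<le> card ({..L} \<union> {m - L..<m})"
    unfolding freq_window_def by (rule card_image_le) simp
  also have "\<dots> \<le> card {..L} + card {m - L..<m}"
    by (rule card_Un_le)
  finally show ?thesis by simp
qed

lemma sum_norm_zn_fourier_extend_zn_char_off_window:
  assumes "a < n" "0 < m" "1 \<le> L"
  shows "(\<Sum>c\<in>{..<m} - freq_window n m a L.
            (cmod (zn_fourier m (zn_extend n m (zn_char n a)) c))\<^sup>2) \<le> 4 / real L"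
proof -
  define b where "b = nat \<lfloor>real a * real m / real n\<rfloor>"
  define g where "g = (\<lambda>j. (b + j) mod m)"
  define J where "J = {L<..<m - L}"
  define F where "F = (\<lambda>c. (cmod (zn_fourier m (zn_extend n m (zn_char n a)) c))\<^sup>2)"
  have "b < m"
    using floor_scaled_freq_bounds(3)[OF assms(1,2)] by (simp add: b_def)
  have "{..<m} - freq_window n m a L \<subseteq> g ` J"
  proof
    fix c
    assume c: "c \<in> {..<m} - freq_window n m a L"
    define j where "j = (c + m - b) mod m"
    have "g j = c"
      using c \<open>b < m\<close> by (simp add: g_def j_def mod_add_right_eq)
    moreover have "j \<notin> {..L} \<union> {m - L..<m}"
      using c \<open>g j = c\<close> by (auto simp: freq_window_def g_def b_def)
    moreover have "j < m"
      using assms(2) by (simp add: j_def)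
    ultimately show "c \<in> g ` J"
      unfolding J_def by (intro rev_image_eqI[of j]) auto
  qed
  then have "(\<Sum>c\<in>{..<m} - freq_window n m a L. F c) \<le> (\<Sum>c\<in>g ` J. F c)"
    by (intro sum_mono2) (auto simp: F_def J_def)
  also have "\<dots> \<le> (\<Sum>j\<in>J. F (g j))"
    using sum_image_le[of J F g] by (simp add: F_def J_def o_def)
  also have "\<dots> \<le> (\<Sum>j\<in>J. 1 / (real (j - 1))\<^sup>2 + 1 / (real (m - j))\<^sup>2)"
  proof (rule sum_mono)
    fix j
    assume "j \<in> J"
    then have "1 < j" "j < m"
      using assms(3) by (auto simp: J_def)
    then show "F (g j) \<le> 1 / (real (j - 1))\<^sup>2 + 1 / (real (m - j))\<^sup>2"
      using norm_zn_fourier_extend_zn_char_off_window[OF assms(1)]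
      by (simp add: F_def g_def b_def of_nat_diff)
  qed
  also have "\<dots> = (\<Sum>j\<in>J. 1 / (real (j - 1))\<^sup>2) + (\<Sum>j\<in>J. 1 / (real (m - j))\<^sup>2)"
    by (rule sum.distrib)
  also have "\<dots> \<le> (\<Sum>i\<in>{L..<m}. 1 / (real i)\<^sup>2) + (\<Sum>i\<in>{L..<m}. 1 / (real i)\<^sup>2)"
  proof (intro add_mono)
    have "inj_on (\<lambda>j. j - 1) J" "inj_on (\<lambda>j. m - j) J"
      by (auto simp: J_def inj_on_def)
    then have "(\<Sum>j\<in>J. 1 / (real (j - 1))\<^sup>2) = (\<Sum>i\<in>(\<lambda>j. j - 1) ` J. 1 / (real i)\<^sup>2)"
      "(\<Sum>j\<in>J. 1 / (real (m - j))\<^sup>2) = (\<Sum>i\<in>(\<lambda>j. m - j) ` J. 1 / (real i)\<^sup>2)"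
      by (simp_all add: sum.reindex)
    moreover have "(\<lambda>j. j - 1) ` J \<subseteq> {L..<m}" "(\<lambda>j. m - j) ` J \<subseteq> {L..<m}"
      by (auto simp: J_def)
    ultimately show "(\<Sum>j\<in>J. 1 / (real (j - 1))\<^sup>2) \<le> (\<Sum>i\<in>{L..<m}. 1 / (real i)\<^sup>2)"
      "(\<Sum>j\<in>J. 1 / (real (m - j))\<^sup>2) \<le> (\<Sum>i\<in>{L..<m}. 1 / (real i)\<^sup>2)"
      by (auto intro: sum_mono2)
  qed
  also have "\<dots> \<le> 4 / real L"
    using sum_inverse_squares_le[OF assms(3), of m] by simp
  finally show ?thesis
    by (simp add: F_def)
qed

subsection \<open>Extending a concentrated family\<close>

lemma zn_norm2sq_extend_le:
  assumes "0 < m"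
  shows "zn_norm2sq m (zn_extend n m h) \<le> real n / real m * zn_norm2sq n h"
proof -
  have "(\<Sum>x<m. (cmod (zn_extend n m h x))\<^sup>2) = (\<Sum>x\<in>{..<m} \<inter> {..<min n m}. (cmod (h x))\<^sup>2)"
    unfolding sum.inter_restrict[OF finite_lessThan] by (intro sum.cong refl) (simp add: zn_extend_def)
  also have "\<dots> \<le> (\<Sum>x<n. (cmod (h x))\<^sup>2)"
    by (intro sum_mono2) auto
  finally have "zn_norm2sq m (zn_extend n m h) \<le> (\<Sum>x<n. (cmod (h x))\<^sup>2) / real m"
    unfolding zn_norm2sq_eq by (simp add: divide_right_mono)
  also have "\<dots> = real n / real m * zn_norm2sq n h"
    by (cases "n = 0") (simp_all add: zn_norm2sq_eq)
  finally show ?thesis .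
qed

lemma zn_norm_residual_extend_le:
  assumes "0 < m" "G \<subseteq> {..<n}" "1 \<le> L"
  defines "W \<equiv> (\<Union>\<alpha>\<in>G. freq_window n m \<alpha> L)"
  shows "zn_norm m (zn_residual m (zn_extend n m f) W)
           \<le> sqrt (real n / real m) * zn_norm n (zn_residual n f G)
             + real (card G) * zn_norm n f * (2 / sqrt (real L))"
proof -
  have "finite G" using assms(2) finite_subset by blast
  have W: "W \<subseteq> {..<m}"
    using freq_window_subset[OF assms(1)] by (auto simp: W_def)
  then have "finite W"
    using finite_subset by blast
  define r where "r = zn_extend n m (zn_residual n f G)"
  define u where "u = (\<lambda>\<alpha>. zn_extend n m (zn_char n \<alpha>))"
  have decomp: "zn_extend n m f = (\<lambda>x. r x + (\<Sum>\<alpha>\<in>G. zn_fourier n f \<alpha> * u \<alpha> x))"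
    unfolding r_def u_def zn_extend_def zn_residual_def zn_restrict_def by (auto simp: fun_eq_iff)
  have "zn_residual m (zn_extend n m f) W
      = (\<lambda>x. zn_residual m r W x + (\<Sum>\<alpha>\<in>G. zn_fourier n f \<alpha> * zn_residual m (u \<alpha>) W x))"
    unfolding decomp by (rule ext) (rule zn_residual_linear[OF \<open>finite G\<close> \<open>finite W\<close>])
  then have "zn_norm m (zn_residual m (zn_extend n m f) W)
      = zn_norm m (\<lambda>x. zn_residual m r W x + (\<Sum>\<alpha>\<in>G. zn_fourier n f \<alpha> * zn_residual m (u \<alpha>) W x))"
    by (rule arg_cong)
  also have "\<dots> \<le> zn_norm m r + (\<Sum>\<alpha>\<in>G. zn_norm n f * (2 / sqrt (real L)))"
  proof (rule order_trans[OF zn_norm_triangle add_mono])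
    show "zn_norm m (zn_residual m r W) \<le> zn_norm m r"
      using W assms(1) by (rule zn_norm_residual_le)
    have "cmod (zn_fourier n f \<alpha>) * zn_norm m (zn_residual m (u \<alpha>) W) \<le> zn_norm n f * (2 / sqrt (real L))"
      if "\<alpha> \<in> G" for \<alpha>
    proof (intro mult_mono)
      show "cmod (zn_fourier n f \<alpha>) \<le> zn_norm n f"
        using norm_zn_fourier_sq_le[of \<alpha> n f] that assms(2)
        by (auto simp: zn_norm_def real_le_rsqrt)
      have "zn_norm2sq m (zn_residual m (u \<alpha>) W)
          \<le> (\<Sum>c\<in>{..<m} - freq_window n m \<alpha> L. (cmod (zn_fourier m (u \<alpha>) c))\<^sup>2)"
        unfolding zn_norm2sq_residual[OF W assms(1)] using that
        by (intro sum_mono2) (auto simp: W_def)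
      also have "\<dots> \<le> 4 / real L"
        unfolding u_def using that assms
        by (intro sum_norm_zn_fourier_extend_zn_char_off_window) auto
      finally have "zn_norm m (zn_residual m (u \<alpha>) W) \<le> sqrt (4 / real L)"
        unfolding zn_norm_def by (rule real_sqrt_le_mono)
      also have "\<dots> = 2 / sqrt (real L)"
        by (simp add: real_sqrt_divide)
      finally show "zn_norm m (zn_residual m (u \<alpha>) W) \<le> 2 / sqrt (real L)" .
    qed simp_all
    then show "zn_norm m (\<lambda>x. \<Sum>\<alpha>\<in>G. zn_fourier n f \<alpha> * zn_residual m (u \<alpha>) W x)
        \<le> (\<Sum>\<alpha>\<in>G. zn_norm n f * (2 / sqrt (real L)))"
      by (intro order_trans[OF zn_norm_sum_le[OF \<open>finite G\<close>]] sum_mono)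
        (simp add: zn_norm_scaleC)
  qed
  also have "zn_norm m r \<le> sqrt (real n / real m) * zn_norm n (zn_residual n f G)"
    using zn_norm2sq_extend_le[OF assms(1), of n "zn_residual n f G"]
    by (simp add: r_def zn_norm_def flip: real_sqrt_mult)
  finally show ?thesis
    by simp
qed

lemma power2_le_of_le_add:
  fixes N a b A s \<delta> :: real
  assumes "0 \<le> N" "N \<le> a + b" "0 \<le> a" "a\<^sup>2 < A" "a \<le> s" "0 \<le> b" "b \<le> \<delta>" "\<delta> \<le> 1"
  shows "N\<^sup>2 < A + \<delta> * (2 * s + 1)"
proof -
  have "N\<^sup>2 \<le> (a + b)\<^sup>2"
    using assms by (intro power_mono) auto
  also have "\<dots> = a\<^sup>2 + b * (2 * a + b)"
    by (simp add: power2_eq_square algebra_simps)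
  also have "b * (2 * a + b) \<le> \<delta> * (2 * s + 1)"
    using assms by (intro mult_mono) auto
  finally show ?thesis
    using assms by linarith
qed

lemma zn_residual_extend_small:
  assumes "0 < n" "0 < m" "G \<subseteq> {..<n}" "real (card G) \<le> p"
    and "zn_norm2sq n f \<le> q" "zn_norm2sq n (zn_residual n f G) < \<epsilon>"
    and "real n / real m \<le> t" "t \<le> 2"
    and "0 < \<delta>" "\<delta> \<le> 1" "4 * p\<^sup>2 * q \<le> \<delta>\<^sup>2 * real L" "1 \<le> L"
  shows "zn_norm2sq m (zn_residual m (zn_extend n m f) (\<Union>\<alpha>\<in>G. freq_window n m \<alpha> L))
           < t * \<epsilon> + \<delta> * (2 * sqrt (2 * \<epsilon>) + 1)"
proof -
  define a where "a = sqrt (real n / real m) * zn_norm n (zn_residual n f G)"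
  define b where "b = real (card G) * zn_norm n f * (2 / sqrt (real L))"
  have "a\<^sup>2 = real n / real m * zn_norm2sq n (zn_residual n f G)"
    by (simp add: a_def power_mult_distrib)
  also have "\<dots> < real n / real m * \<epsilon>"
    using assms by (intro mult_strict_left_mono) auto
  also have "\<dots> \<le> t * \<epsilon>"
    using assms zn_norm2sq_nonneg[of n "zn_residual n f G"] by (intro mult_right_mono) auto
  finally have a2: "a\<^sup>2 < t * \<epsilon>" .
  have "0 \<le> \<epsilon>"
    using assms zn_norm2sq_nonneg[of n "zn_residual n f G"] by linarith
  then have "t * \<epsilon> \<le> 2 * \<epsilon>"
    using assms by (intro mult_right_mono) auto
  with a2 have "a \<le> sqrt (2 * \<epsilon>)"
    by (intro real_le_rsqrt) simp
  have "b\<^sup>2 \<le> p\<^sup>2 * q * 4 / real L"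
    using assms zn_norm2sq_nonneg[of n f]
    by (auto simp: b_def power_mult_distrib power_divide intro!: mult_mono power_mono divide_right_mono)
  also have "\<dots> \<le> \<delta>\<^sup>2"
    using assms by (simp add: divide_simps mult_ac)
  finally have "b \<le> \<delta>"
    using assms by (simp add: power2_le_iff_abs_le)
  have "0 \<le> b"
    by (simp add: b_def)
  moreover have "zn_norm m (zn_residual m (zn_extend n m f) (\<Union>\<alpha>\<in>G. freq_window n m \<alpha> L)) \<le> a + b"
    unfolding a_def b_def using assms by (intro zn_norm_residual_extend_le) auto
  ultimately show ?thesis
    using power2_le_of_le_add[OF zn_norm_nonneg _ _ a2 \<open>a \<le> sqrt (2 * \<epsilon>)\<close> _ \<open>b \<le> \<delta>\<close> assms(10)]
    by (simp add: a_def)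
qed

lemma zn_residual_extend_small_exists:
  fixes P Q :: "real poly"
  assumes "0 < n" "0 < m" "G \<subseteq> {..<n}" "real (card G) \<le> poly P x"
    and "zn_norm2sq n f \<le> poly Q x" "zn_norm2sq n (zn_residual n f G) < \<epsilon>"
    and "real n / real m \<le> t" "t \<le> 2" "0 < \<eta>"
  defines "\<delta> \<equiv> min 1 (\<eta> / (2 * sqrt (2 * \<epsilon>) + 1))"
  shows "\<exists>\<Gamma>. \<Gamma> \<subseteq> {..<m} \<and> real (card \<Gamma>) \<le> poly (P * (smult (8 / \<delta>\<^sup>2) (P * P * Q) + [:5:])) x
           \<and> zn_norm2sq m (zn_residual m (zn_extend n m f) \<Gamma>) < t * \<epsilon> + \<eta>"
proof (intro exI conjI)
  define p where "p = poly P x"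
  define q where "q = poly Q x"
  define X where "X = 4 * p\<^sup>2 * q / \<delta>\<^sup>2"
  define L where "L = nat \<lceil>X\<rceil> + 1"
  define \<Gamma> where "\<Gamma> = (\<Union>\<alpha>\<in>G. freq_window n m \<alpha> L)"
  have "0 \<le> \<epsilon>"
    using assms(6) zn_norm2sq_nonneg[of n "zn_residual n f G"] by linarith
  then have c: "0 < 2 * sqrt (2 * \<epsilon>) + 1"
    using real_sqrt_ge_zero[of "2 * \<epsilon>"] by linarith
  then have \<delta>: "0 < \<delta>" "\<delta> \<le> 1"
    using assms(9) by (simp_all add: \<delta>_def)
  have "\<delta> \<le> \<eta> / (2 * sqrt (2 * \<epsilon>) + 1)"
    by (simp add: \<delta>_def)
  then have \<delta>\<eta>: "\<delta> * (2 * sqrt (2 * \<epsilon>) + 1) \<le> \<eta>"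
    using c by (simp add: pos_le_divide_eq)
  have "0 \<le> p" "0 \<le> q"
    using assms zn_norm2sq_nonneg[of n f] of_nat_0_le_iff[of "card G"] unfolding p_def q_def
    by linarith+
  then have "0 \<le> X"
    by (simp add: X_def)
  then have L: "X \<le> real L" "real L \<le> X + 2"
    unfolding L_def by linarith+
  show "\<Gamma> \<subseteq> {..<m}"
    using freq_window_subset[OF assms(2)] by (auto simp: \<Gamma>_def)
  have "finite G"
    using assms(3) finite_subset by blast
  then have "card \<Gamma> \<le> (\<Sum>\<alpha>\<in>G. card (freq_window n m \<alpha> L))"
    unfolding \<Gamma>_def by (rule card_UN_le)
  also have "\<dots> \<le> card G * (2 * L + 1)"
    using card_freq_window_le sum_mono[of G _ "\<lambda>_. 2 * L + 1"] by simp
  finally have "real (card \<Gamma>) \<le> real (card G * (2 * L + 1))"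
    by (simp only: of_nat_le_iff)
  also have "\<dots> = real (card G) * (2 * real L + 1)"
    by (simp add: algebra_simps)
  also have "\<dots> \<le> p * (2 * (X + 2) + 1)"
    using assms L \<open>0 \<le> p\<close> unfolding p_def by (intro mult_mono) auto
  finally show "real (card \<Gamma>) \<le> poly (P * (smult (8 / \<delta>\<^sup>2) (P * P * Q) + [:5:])) x"
    by (simp add: X_def p_def q_def power2_eq_square algebra_simps)
  have "zn_norm2sq m (zn_residual m (zn_extend n m f) \<Gamma>) < t * \<epsilon> + \<delta> * (2 * sqrt (2 * \<epsilon>) + 1)"
    unfolding \<Gamma>_def using assms \<delta> L(1)
    by (intro zn_residual_extend_small[where p = p and q = q]) (auto simp: X_def L_def p_def q_def field_simps)
  with \<delta>\<eta> show "zn_norm2sq m (zn_residual m (zn_extend n m f) \<Gamma>) < t * \<epsilon> + \<eta>"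
    by linarith
qed

lemma concentrated_of_log_bound:
  fixes R :: "real poly"
  assumes "\<And>k. 0 < ns k" "\<And>k. real (ns k) \<le> 2 * real (ms k)"
    and "\<And>k. \<exists>\<Gamma>. \<Gamma> \<subseteq> {..<ms k} \<and> real (card \<Gamma>) \<le> poly R (ln (real (ns k)))
           \<and> zn_norm2sq (ms k) (zn_residual (ms k) (gs k) \<Gamma>) < \<delta>"
  shows "concentrated \<delta> ms gs"
proof -
  have "0 \<le> ln (2::real)"
    by simp
  then obtain R' :: "real poly"
    where R': "\<And>x y. 0 \<le> x \<Longrightarrow> 0 \<le> y \<Longrightarrow> y \<le> x + ln 2 \<Longrightarrow> poly R y \<le> poly R' x"
    by (rule poly_bound_shift) blast
  have "poly R (ln (real (ns k))) \<le> poly R' (ln (real (ms k)))" for k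
  proof (rule R')
    have "0 < ms k"
      using assms(1,2)[of k] by linarith
    have "ln (real (ns k)) \<le> ln (2 * real (ms k))"
      using assms(1,2)[of k] by simp
    also have "\<dots> = ln (real (ms k)) + ln 2"
      using \<open>0 < ms k\<close> by (simp add: ln_mult)
    finally show "ln (real (ns k)) \<le> ln (real (ms k)) + ln 2" .
    show "0 \<le> ln (real (ms k))" "0 \<le> ln (real (ns k))"
      using \<open>0 < ms k\<close> assms(1)[of k] by simp_all
  qed
  then show ?thesis
    unfolding concentrated_def using assms(3) unfolding zn_residual_def
    by (meson order_trans)
qed

lemma ratio_le_SUP_ratio:
  assumes "\<And>k. 0 < ms k" "\<And>k. real (ns k) \<le> 2 * real (ms k)"
  shows "real (ns k) / real (ms k) \<le> (SUP k. real (ns k) / real (ms k))"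
    and "(SUP k. real (ns k) / real (ms k)) \<le> 2"
proof -
  have ratio_le_2: "real (ns k) / real (ms k) \<le> 2" for k
    using assms[of k] by (simp add: divide_le_eq)
  then show "real (ns k) / real (ms k) \<le> (SUP k. real (ns k) / real (ms k))"
    by (intro cSUP_upper bdd_aboveI2) auto
  show "(SUP k. real (ns k) / real (ms k)) \<le> 2"
    using ratio_le_2 by (intro cSUP_least) auto
qed

theorem theorem1p6:
  fixes ns ms :: "nat \<Rightarrow> nat" and Q :: "real poly" and fs :: "nat \<Rightarrow> nat \<Rightarrow> complex"
    and \<epsilon> :: real
  assumes "\<And>k. ns k > 0" and "\<And>k. ms k > 0"
    and "\<And>k. real (ms k) \<ge> real (ns k) / 2"
    and "\<And>k. zn_norm2sq (ns k) (fs k) \<le> poly Q (ln (real (ns k)))"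
    and "\<epsilon> > 0"
    and "concentrated \<epsilon> ns fs"
  shows "\<forall>\<eta>>0. concentrated ((SUP k. real (ns k) / real (ms k)) * \<epsilon> + \<eta>) ms
            (\<lambda>k. zn_extend (ns k) (ms k) (fs k))"
proof (intro allI impI)
  fix \<eta> :: real
  assume "\<eta> > 0"
  have ratio: "real (ns k) \<le> 2 * real (ms k)" for k
    using assms(3)[of k] by simp
  obtain P :: "real poly" and G where G: "\<And>k. G k \<subseteq> {..<ns k}"
    "\<And>k. real (card (G k)) \<le> poly P (ln (real (ns k)))"
    "\<And>k. zn_norm2sq (ns k) (zn_residual (ns k) (fs k) (G k)) < \<epsilon>"
    using assms(6) unfolding concentrated_def zn_residual_def[abs_def] by metis
  show "concentrated ((SUP k. real (ns k) / real (ms k)) * \<epsilon> + \<eta>) ms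
      (\<lambda>k. zn_extend (ns k) (ms k) (fs k))"
    by (rule concentrated_of_log_bound[OF assms(1) ratio],
        rule zn_residual_extend_small_exists[OF assms(1,2) G(1,2) assms(4) G(3)
          ratio_le_SUP_ratio[OF assms(2) ratio] \<open>\<eta> > 0\<close>])
qed

end
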